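(* (i) The set $A$ of atoms is not FSM ascending infinite. (ii) If $X$ is an infinite finitely supported subset of an invariant set $U$, then $\wp_{fin}(X)$ is FSM ascending infinite.
   Context: Framework (FSM). Work in ZF with a fixed infinite set $A$ of atoms; $S_A$ is the group of bijections of $A$ fixing all but finitely many atoms, acting on $A$ by evaluation; $Fix(S)$ is the set of $\pi\in S_A$ fixing each element of $S\subseteq A$; $S$ supports $x$ if $\pi\cdot x=x$ for all $\pi\in Fix(S)$. An invariant set is an $S_A$-set all of whose elements have finite supports; subsets carry $\pi\star Z=\{\pi\cdot z:z\in Z\}$. $\wp_{fin}(X)$ is the set of finite subsets of $X$. $\mathbb N$ carries the trivial action, and a map $n\mapsto X_n$ is finitely supported if there is a finite $S$ with $\pi\star X_n=X_n$ for all $n$ and all $\pi\in Fix(S)$. "Infinite" means not in bijection with a natural number. A finitely supported subset $Y$ of an invariant set $V$ is FSM ascending infinite if there is a sequence $(Y_n)_{n\in\mathbb N}$ of finitely supported subsets of $V$ with $Y_0\subseteq Y_1\subseteq\cdots$, such that $n\mapsto Y_n$ is finitely supported, $Y\subseteq\bigcup_nY_n$, and there is no $n$ with $Y\subseteq Y_n$. *)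

theory Defs
  imports Main
begin

definition SA :: "('at \<Rightarrow> 'at) set" where
  "SA = {\<pi>. bij \<pi> \<and> finite {a. \<pi> a \<noteq> a}}"

definition Fix :: "'at set \<Rightarrow> ('at \<Rightarrow> 'at) set" where
  "Fix S = {\<pi> \<in> SA. \<forall>a\<in>S. \<pi> a = a}"

definition supports :: "(('at \<Rightarrow> 'at) \<Rightarrow> 'b \<Rightarrow> 'b) \<Rightarrow> 'at set \<Rightarrow> 'b \<Rightarrow> bool" where
  "supports act S x \<longleftrightarrow> (\<forall>\<pi>\<in>Fix S. act \<pi> x = x)"

definition invariant_set :: "(('at \<Rightarrow> 'at) \<Rightarrow> 'b \<Rightarrow> 'b) \<Rightarrow> 'b set \<Rightarrow> bool" where
  "invariant_set act U \<longleftrightarrow>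
     (\<forall>\<pi>\<in>SA. \<forall>x\<in>U. act \<pi> x \<in> U) \<and>
     (\<forall>x\<in>U. act id x = x) \<and>
     (\<forall>\<pi>\<in>SA. \<forall>\<sigma>\<in>SA. \<forall>x\<in>U. act (\<pi> \<circ> \<sigma>) x = act \<pi> (act \<sigma> x)) \<and>
     (\<forall>x\<in>U. \<exists>S. finite S \<and> supports act S x)"

definition set_act :: "(('at \<Rightarrow> 'at) \<Rightarrow> 'b \<Rightarrow> 'b) \<Rightarrow> ('at \<Rightarrow> 'at) \<Rightarrow> 'b set \<Rightarrow> 'b set" where
  "set_act act \<pi> Z = act \<pi> ` Z"

definition fs_subset :: "(('at \<Rightarrow> 'at) \<Rightarrow> 'b \<Rightarrow> 'b) \<Rightarrow> 'b set \<Rightarrow> 'b set \<Rightarrow> bool" where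
  "fs_subset act V Y \<longleftrightarrow> Y \<subseteq> V \<and> (\<exists>S. finite S \<and> supports (set_act act) S Y)"

definition pow_fin :: "'b set \<Rightarrow> 'b set set" where
  "pow_fin X = {Z. Z \<subseteq> X \<and> finite Z}"

definition fsm_asc_inf :: "(('at \<Rightarrow> 'at) \<Rightarrow> 'b \<Rightarrow> 'b) \<Rightarrow> 'b set \<Rightarrow> 'b set \<Rightarrow> bool" where
  "fsm_asc_inf act V Y \<longleftrightarrow> fs_subset act V Y \<and>
     (\<exists>Ys :: nat \<Rightarrow> 'b set.
        (\<forall>n. fs_subset act V (Ys n)) \<and>
        (\<forall>n. Ys n \<subseteq> Ys (Suc n)) \<and>
        (\<exists>S. finite S \<and> (\<forall>\<pi>\<in>Fix S. \<forall>n. set_act act \<pi> (Ys n) = Ys n)) \<and>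
        Y \<subseteq> (\<Union>n. Ys n) \<and>
        \<not> (\<exists>n. Y \<subseteq> Ys n))"

end

theory Submission
  imports Defs "HOL-Combinatorics.Transposition"
begin

text \<open>(i) If a chain of sets of atoms has a common finite support S and covers all atoms,
  some member contains an atom outside S; since transpositions of atoms outside S fix
  that member, it contains every atom outside S, and a later member also contains the
  finitely many atoms of S, so the chain is eventually everything.
  (ii) Any permutation fixing X also fixes each set of subsets of X of size at most n,
  so these sets form a uniformly supported chain exhausting the finite subsets of X,
  and it never stabilises because X is infinite.\<close>

definition bounded_subsets :: "'b set \<Rightarrow> nat \<Rightarrow> 'b set set" where
  "bounded_subsets X n = {Z. Z \<subseteq> X \<and> finite Z \<and> card Z \<le> n}"

lemma image_bounded_subsets:
  assumes "f ` X = X"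
  shows "(`) f ` bounded_subsets X n = bounded_subsets X n"
proof
  show "(`) f ` bounded_subsets X n \<subseteq> bounded_subsets X n"
    using assms by (auto simp: bounded_subsets_def intro: card_image_le[THEN order_trans])
next
  show "bounded_subsets X n \<subseteq> (`) f ` bounded_subsets X n"
  proof
    fix Z assume Z: "Z \<in> bounded_subsets X n"
    then have "Z \<subseteq> f ` X"
      using assms by (auto simp: bounded_subsets_def)
    define C where "C = inv_into X f ` Z"
    have "f ` C = Z"
      unfolding C_def using \<open>Z \<subseteq> f ` X\<close> by (force simp: f_inv_into_f image_comp)
    moreover have "C \<in> bounded_subsets X n"
      unfolding C_def using Z \<open>Z \<subseteq> f ` X\<close>
      by (auto simp: bounded_subsets_def intro: inv_into_into card_image_le[THEN order_trans])
    ultimately show "Z \<in> (`) f ` bounded_subsets X n" by blast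
  qed
qed

lemma bounded_subsets_Suc_mono: "bounded_subsets X n \<subseteq> bounded_subsets X (Suc n)"
  by (auto simp: bounded_subsets_def)

lemma pow_fin_eq_UN_bounded_subsets: "pow_fin X = (\<Union>n. bounded_subsets X n)"
  by (auto simp: pow_fin_def bounded_subsets_def)

lemma image_pow_fin:
  assumes "f ` X = X"
  shows "(`) f ` pow_fin X = pow_fin X"
  by (simp add: pow_fin_eq_UN_bounded_subsets image_UN image_bounded_subsets[OF assms])

lemma pow_fin_not_subset_bounded_subsets:
  assumes "infinite X"
  shows "\<not> pow_fin X \<subseteq> bounded_subsets X n"
proof
  assume sub: "pow_fin X \<subseteq> bounded_subsets X n"
  obtain Z where "Z \<subseteq> X" "finite Z" "card Z = Suc n"
    using infinite_arbitrarily_large[OF assms] by blast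
  then have "Z \<in> bounded_subsets X n"
    using sub by (auto simp: pow_fin_def)
  with \<open>card Z = Suc n\<close> show False
    by (simp add: bounded_subsets_def)
qed

lemma fsm_asc_inf_pow_fin:
  assumes "fs_subset act U X" and "infinite X"
  shows "fsm_asc_inf (set_act act) (pow_fin U) (pow_fin X)"
proof -
  obtain S where "finite S" and "X \<subseteq> U" and fix_X: "\<And>\<pi>. \<pi> \<in> Fix S \<Longrightarrow> act \<pi> ` X = X"
    using assms(1) unfolding fs_subset_def supports_def set_act_def by blast
  have supp_pow_fin: "supports (set_act (set_act act)) S (pow_fin X)"
    using image_pow_fin[OF fix_X] by (simp add: supports_def set_act_def[abs_def])
  have supp_bounded: "supports (set_act (set_act act)) S (bounded_subsets X n)" for n
    using image_bounded_subsets[OF fix_X] by (simp add: supports_def set_act_def[abs_def])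
  have "pow_fin X \<subseteq> pow_fin U" "bounded_subsets X n \<subseteq> pow_fin U" for n
    using \<open>X \<subseteq> U\<close> by (auto simp: pow_fin_def bounded_subsets_def)
  with \<open>finite S\<close> supp_pow_fin supp_bounded have
    "fs_subset (set_act act) (pow_fin U) (pow_fin X)"
    "fs_subset (set_act act) (pow_fin U) (bounded_subsets X n)" for n
    unfolding fs_subset_def by blast+
  moreover have "\<exists>S. finite S \<and> (\<forall>\<pi>\<in>Fix S. \<forall>n.
      set_act (set_act act) \<pi> (bounded_subsets X n) = bounded_subsets X n)"
    using \<open>finite S\<close> supp_bounded unfolding supports_def by blast
  ultimately show ?thesis
    unfolding fsm_asc_inf_def
    using bounded_subsets_Suc_mono pow_fin_eq_UN_bounded_subsets[of X]
      pow_fin_not_subset_bounded_subsets[OF assms(2)]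
    by (intro conjI exI[of _ "bounded_subsets X"] allI) simp_all
qed

lemma transpose_in_Fix:
  assumes "a \<notin> S" and "b \<notin> S"
  shows "Transposition.transpose a b \<in> Fix S"
proof -
  have "{x. Transposition.transpose a b x \<noteq> x} \<subseteq> {a, b}"
    by (auto simp: transpose_def)
  then show ?thesis
    using assms by (auto simp: Fix_def SA_def transpose_def intro: finite_subset)
qed

lemma supported_atom_set_contains_complement:
  assumes "\<forall>\<pi>\<in>Fix S. \<pi> ` Y = Y" and "a \<in> Y" "a \<notin> S" "b \<notin> S"
  shows "b \<in> Y"
proof -
  have "b \<in> Transposition.transpose a b ` Y"
    using \<open>a \<in> Y\<close> by (metis image_eqI transpose_apply_first)
  then show ?thesis
    using assms(1) transpose_in_Fix[OF \<open>a \<notin> S\<close> \<open>b \<notin> S\<close>] by simp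
qed

lemma finite_subset_UN_Suc_mono:
  assumes "finite A" and "A \<subseteq> (\<Union>n. Y n)" and "\<And>n. Y n \<subseteq> Y (Suc n)"
  shows "\<exists>n. A \<subseteq> Y n"
  using assms(1,2)
proof (induction A rule: finite_induct)
  case empty
  then show ?case by simp
next
  case (insert a A)
  then obtain m n where "A \<subseteq> Y m" "a \<in> Y n" by blast
  moreover have "Y m \<subseteq> Y (max m n)" "Y n \<subseteq> Y (max m n)"
    by (simp_all add: lift_Suc_mono_le[of Y, OF assms(3)])
  ultimately show ?case by blast
qed

lemma not_fsm_asc_inf_atoms:
  assumes "infinite (UNIV :: 'at set)"
  shows "\<not> fsm_asc_inf (\<lambda>\<pi> a. \<pi> a) (UNIV :: 'at set) UNIV"
proof
  assume "fsm_asc_inf (\<lambda>\<pi> a. \<pi> a) (UNIV :: 'at set) UNIV"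
  then obtain Y :: "nat \<Rightarrow> 'at set" and S where
    mono: "\<forall>n. Y n \<subseteq> Y (Suc n)" and "finite S"
    and fix_Y: "\<forall>\<pi>\<in>Fix S. \<forall>n. set_act (\<lambda>\<pi> a. \<pi> a) \<pi> (Y n) = Y n"
    and cover: "UNIV \<subseteq> (\<Union>n. Y n)" and proper: "\<not> (\<exists>n. UNIV \<subseteq> Y n)"
    unfolding fsm_asc_inf_def by (elim conjE exE) blast
  obtain a where "a \<notin> S"
    using assms \<open>finite S\<close> ex_new_if_finite by blast
  have "insert a S \<subseteq> (\<Union>n. Y n)"
    using cover by blast
  then obtain n where n: "insert a S \<subseteq> Y n"
    using finite_subset_UN_Suc_mono[of "insert a S" Y, OF _ _ mono[rule_format]] \<open>finite S\<close>
    by blast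
  have "x \<in> Y n" for x
  proof (cases "x \<in> S")
    case True
    with n show ?thesis by blast
  next
    case False
    have "\<forall>\<pi>\<in>Fix S. \<pi> ` Y n = Y n"
      using fix_Y by (simp add: set_act_def)
    moreover have "a \<in> Y n"
      using n by blast
    ultimately show ?thesis
      using \<open>a \<notin> S\<close> False by (rule supported_atom_set_contains_complement)
  qed
  then have "UNIV \<subseteq> Y n"
    by blast
  with proper show False
    by blast
qed

theorem mainTheorem14:
  assumes "infinite (UNIV :: 'at set)"
  shows "\<not> fsm_asc_inf (\<lambda>\<pi> a. \<pi> a) (UNIV :: 'at set) UNIV
    \<and> (\<forall>(act :: ('at \<Rightarrow> 'at) \<Rightarrow> 'b \<Rightarrow> 'b) U X.
          invariant_set act U \<and> fs_subset act U X \<and> infinite X \<longrightarrow>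
          fsm_asc_inf (set_act act) (pow_fin U) (pow_fin X))"
  \<comment> \<open>Part (ii) does not use that U is an invariant set.\<close>
  using not_fsm_asc_inf_atoms[OF assms] fsm_asc_inf_pow_fin by blast

end
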